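(* Let $K, C \in \mathbb{N}$ be positive integers, let $p \in \mathbb{Q}_{>0}$, let $q_1, q_2 \in \mathbb{Q}$, and let $\varphi, \psi : \mathbb{Q} \to \mathbb{Z}$ be functions that are antiperiodic with antiperiod $C$ on the grid $\frac{C}{K}\mathbb{Z}$, i.e. $\varphi(x + C) = -\varphi(x)$ and $\psi(x+C) = -\psi(x)$ for all $x \in \frac{C}{K}\mathbb{Z}$. For nonzero $x \in \frac{1}{K}\mathbb{Z}$ define \[ s_d(x) = \frac{p^x + q_1 \varphi(Cx) + q_2 \psi(Cx)}{x}, \] where $p^x$ denotes the positive real power. Let $t = \frac{i}{K}$ with $i \in \mathbb{Z}\setminus\{0\}$, and let $u, v$ be nonnegative integers such that the four points $t,\ t+2v+1,\ t+2u,\ t+2u+2v+1$ are all nonzero. Put \[ s_0 = s_d(t),\quad s_1 = s_d(t+2v+1),\quad s_2 = s_d(t+2u),\quad s_3 = s_d(t+2u+2v+1). \] Then \[ \frac{s_0 \cdot t + s_1 \cdot (t + 2v + 1)}{s_2 \cdot (t + 2u) + s_3 \cdot (t + 2u + 2v + 1)} = \frac{1}{p^{2u}}. \]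
   Context: The functions $\varphi,\psi$ play the role of discrete "oscillators"; antiperiodicity with antiperiod $C$ means a shift of the argument by $C$ flips the sign. The function $s_d$ is called the discrete generating function. *)

theory Defs
  imports Complex_Main
begin

definition s_d :: "rat \<Rightarrow> rat \<Rightarrow> rat \<Rightarrow> nat \<Rightarrow> (rat \<Rightarrow> int) \<Rightarrow> (rat \<Rightarrow> int) \<Rightarrow> rat \<Rightarrow> real" where
  "s_d p q1 q2 C \<phi> \<psi> x =
     (real_of_rat p powr real_of_rat x
       + real_of_rat q1 * real_of_int (\<phi> (of_nat C * x))
       + real_of_rat q2 * real_of_int (\<psi> (of_nat C * x))) / real_of_rat x"

definition antiperiodic_on_grid :: "nat \<Rightarrow> nat \<Rightarrow> (rat \<Rightarrow> int) \<Rightarrow> bool" where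
  "antiperiodic_on_grid K C f \<longleftrightarrow>
     (\<forall>j::int. f (of_int j * of_nat C / of_nat K + of_nat C) = - f (of_int j * of_nat C / of_nat K))"

end

theory Submission
  imports Defs
begin

text \<open>An odd shift of the
  argument by n flips the sign of both oscillators at C x, so they cancel in the sum over x and
  x + n, which is p^x + p^(x+n). Both the numerator (x = t) and the denominator (x = t + 2u)
  of the quotient are such sums, and the denominator is p^(2u) times the numerator.\<close>

lemma antiperiodic_on_grid_shift:
  assumes "K > 0" "antiperiodic_on_grid K C f"
  shows "f (of_int j * of_nat C / of_nat K + of_nat n * of_nat C)
       = (-1) ^ n * f (of_int j * of_nat C / of_nat K)"
proof (induction n)
  case 0
  then show ?case by simp
next
  case (Suc n)
  have grid: "of_int j * of_nat C / of_nat K + of_nat n * of_nat C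
      = of_int (j + int n * int K) * of_nat C / (of_nat K :: rat)"
    using \<open>K > 0\<close> by (simp add: field_simps)
  have "f (of_int j * of_nat C / of_nat K + of_nat (Suc n) * of_nat C)
      = f (of_int (j + int n * int K) * of_nat C / of_nat K + of_nat C)"
    using grid by (simp add: algebra_simps)
  also have "\<dots> = - f (of_int (j + int n * int K) * of_nat C / of_nat K)"
    using assms(2) unfolding antiperiodic_on_grid_def by blast
  also have "\<dots> = - f (of_int j * of_nat C / of_nat K + of_nat n * of_nat C)"
    using grid by simp
  finally show ?case using Suc by simp
qed

lemma antiperiodic_on_grid_odd_shift:
  assumes "K > 0" "antiperiodic_on_grid K C f" "x = of_int i / of_nat K" "odd n"
  shows "f (of_nat C * (x + of_nat n)) = - f (of_nat C * x)"
proof -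
  have "of_nat C * x = of_int i * of_nat C / of_nat K"
    using assms(3) by simp
  moreover have "of_nat C * (x + of_nat n) = of_int i * of_nat C / of_nat K + of_nat n * of_nat C"
    using assms(3) by (simp add: algebra_simps)
  ultimately show ?thesis
    using antiperiodic_on_grid_shift[OF assms(1,2)] \<open>odd n\<close> by simp
qed

lemma s_d_times_arg:
  assumes "x \<noteq> 0"
  shows "s_d p q1 q2 C \<phi> \<psi> x * real_of_rat x
       = real_of_rat p powr real_of_rat x + real_of_rat q1 * real_of_int (\<phi> (of_nat C * x))
         + real_of_rat q2 * real_of_int (\<psi> (of_nat C * x))"
  using assms by (simp add: s_d_def)

lemma s_d_odd_shift_sum:
  assumes "K > 0" "antiperiodic_on_grid K C \<phi>" "antiperiodic_on_grid K C \<psi>"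
    and "x = of_int i / of_nat K" "odd n" "x \<noteq> 0" "x + of_nat n \<noteq> 0"
  shows "s_d p q1 q2 C \<phi> \<psi> x * real_of_rat x
         + s_d p q1 q2 C \<phi> \<psi> (x + of_nat n) * real_of_rat (x + of_nat n)
       = real_of_rat p powr real_of_rat x + real_of_rat p powr real_of_rat (x + of_nat n)"
  using s_d_times_arg[OF \<open>x \<noteq> 0\<close>] s_d_times_arg[OF \<open>x + of_nat n \<noteq> 0\<close>]
    antiperiodic_on_grid_odd_shift[OF assms(1,2,4,5)]
    antiperiodic_on_grid_odd_shift[OF assms(1,3,4,5)]
  by simp

theorem mainTheorem1:
  fixes K C u v :: nat and p q1 q2 :: rat and \<phi> \<psi> :: "rat \<Rightarrow> int" and i :: int and t :: rat
  assumes "K > 0" and "C > 0" and "p > 0"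
    and "antiperiodic_on_grid K C \<phi>" and "antiperiodic_on_grid K C \<psi>"
    and "i \<noteq> 0" and "t = of_int i / of_nat K"
    and "t \<noteq> 0" and "t + 2 * of_nat v + 1 \<noteq> 0" and "t + 2 * of_nat u \<noteq> 0"
    and "t + 2 * of_nat u + 2 * of_nat v + 1 \<noteq> 0"
  shows "(s_d p q1 q2 C \<phi> \<psi> t * real_of_rat t
          + s_d p q1 q2 C \<phi> \<psi> (t + 2 * of_nat v + 1) * real_of_rat (t + 2 * of_nat v + 1))
        / (s_d p q1 q2 C \<phi> \<psi> (t + 2 * of_nat u) * real_of_rat (t + 2 * of_nat u)
          + s_d p q1 q2 C \<phi> \<psi> (t + 2 * of_nat u + 2 * of_nat v + 1)
              * real_of_rat (t + 2 * of_nat u + 2 * of_nat v + 1))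
      = 1 / real_of_rat p powr (2 * real u)"
proof -
  define n where "n = 2 * v + 1"
  define P where "P = real_of_rat p"
  have odd_n: "odd n" by (simp add: n_def)
  have shift_t: "t + 2 * of_nat v + 1 = t + of_nat n"
    by (simp add: n_def)
  have shift_tu: "t + 2 * of_nat u + 2 * of_nat v + 1 = (t + 2 * of_nat u) + of_nat n"
    by (simp add: n_def)
  have tu_grid: "t + 2 * of_nat u = of_int (i + 2 * int u * int K) / of_nat K"
    using \<open>K > 0\<close> \<open>t = of_int i / of_nat K\<close> by (simp add: field_simps)
  have numerator:
    "s_d p q1 q2 C \<phi> \<psi> t * real_of_rat t
       + s_d p q1 q2 C \<phi> \<psi> (t + of_nat n) * real_of_rat (t + of_nat n)
     = P powr real_of_rat t + P powr real_of_rat (t + of_nat n)"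
    using s_d_odd_shift_sum[OF assms(1,4,5,7) odd_n] assms(8,9)
    unfolding shift_t P_def by simp
  have denominator:
    "s_d p q1 q2 C \<phi> \<psi> (t + 2 * of_nat u) * real_of_rat (t + 2 * of_nat u)
       + s_d p q1 q2 C \<phi> \<psi> (t + 2 * of_nat u + of_nat n)
           * real_of_rat (t + 2 * of_nat u + of_nat n)
     = P powr (2 * real u) * (P powr real_of_rat t + P powr real_of_rat (t + of_nat n))"
    using s_d_odd_shift_sum[OF assms(1,4,5) tu_grid odd_n] assms(10,11)
    unfolding shift_tu P_def by (simp add: of_rat_add of_rat_mult powr_add algebra_simps)
  have "P powr real_of_rat t + P powr real_of_rat (t + of_nat n) > 0"
    using \<open>p > 0\<close> by (simp add: P_def add_pos_pos)
  then show ?thesis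
    unfolding shift_t shift_tu numerator denominator P_def[symmetric] by simp
qed

end
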